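(* Let $0<\lambda<\frac{5-\sqrt{21}}{2}$ and let $K$ be the attractor of the IFS $f_1(x)=\lambda x$, $f_2(x)=\lambda x+2\lambda$, $f_3(x)=\lambda x+3\lambda-\lambda^2$, $f_4(x)=\lambda x+1-\lambda$. Then $$\dim_H(U_2)=\dim_H\big(U_1\cap(U_1+1-\lambda)\big)=\dim_H(U_1),$$ where $U_1+1-\lambda=\{x+1-\lambda:x\in U_1\}$. Moreover, $U_1\cap(U_1+1-\lambda)$ is exactly the set of points of $K$ having a unique coding and whose unique coding begins with the digit $4$.
   Context: A coding of $x\in K$ is a sequence $(i_n)\in\{1,2,3,4\}^{\mathbb{N}}$ with $x=\lim_{n\to\infty}f_{i_1}\circ\cdots\circ f_{i_n}(0)$. $U_k$ denotes the set of $x\in K$ having exactly $k$ distinct codings. *)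

theory Defs
  imports "HOL-Analysis.Analysis"
begin

definition hausdorff_content :: "real \<Rightarrow> real \<Rightarrow> real set \<Rightarrow> ennreal" where
  "hausdorff_content s \<delta> A =
     (INF U \<in> {U :: nat \<Rightarrow> real set. A \<subseteq> (\<Union>n. U n) \<and> (\<forall>n. bounded (U n) \<and> diameter (U n) \<le> \<delta>)}.
        (\<Sum>n. ennreal (diameter (U n) powr s)))"

definition hausdorff_measure :: "real \<Rightarrow> real set \<Rightarrow> ennreal" where
  "hausdorff_measure s A = (SUP \<delta> \<in> {0<..}. hausdorff_content s \<delta> A)"

text \<open>Hausdorff dimension: inf of the s > 0 with H^s(A) = 0 (for subsets of the line this set
  contains every s > 1, so the infimum is a well-defined real number in [0,1]).\<close>
definition hausdorff_dim :: "real set \<Rightarrow> real" where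
  "hausdorff_dim A = Inf {s :: real. 0 < s \<and> hausdorff_measure s A = 0}"

text \<open>The maps f_1, ..., f_4 (the digit is the natural number i; only i in {1..4} is used).\<close>
definition ifs_map :: "real \<Rightarrow> nat \<Rightarrow> real \<Rightarrow> real" where
  "ifs_map lam i x =
     (if i = 1 then lam * x
      else if i = 2 then lam * x + 2 * lam
      else if i = 3 then lam * x + 3 * lam - lam ^ 2
      else lam * x + 1 - lam)"

definition attractor :: "real \<Rightarrow> real set" where
  "attractor lam = (THE K. compact K \<and> K \<noteq> {} \<and> K = (\<Union>i\<in>{1..4}. ifs_map lam i ` K))"

fun comp_prefix :: "real \<Rightarrow> (nat \<Rightarrow> nat) \<Rightarrow> nat \<Rightarrow> real \<Rightarrow> real" where
  "comp_prefix lam c 0 = id"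
| "comp_prefix lam c (Suc n) = comp_prefix lam c n \<circ> ifs_map lam (c n)"

definition is_coding :: "real \<Rightarrow> (nat \<Rightarrow> nat) \<Rightarrow> real \<Rightarrow> bool" where
  "is_coding lam c x \<longleftrightarrow> (\<forall>n. c n \<in> {1..4}) \<and> (\<lambda>n. comp_prefix lam c n 0) \<longlonglongrightarrow> x"

definition codings :: "real \<Rightarrow> real \<Rightarrow> (nat \<Rightarrow> nat) set" where
  "codings lam x = {c. is_coding lam c x}"

definition U :: "real \<Rightarrow> nat \<Rightarrow> real set" where
  "U lam k = {x \<in> attractor lam. finite (codings lam x) \<and> card (codings lam x) = k}"

end

theory Submission
  imports Defs
begin

(* For lam < (5 - sqrt 21)/2 the first-level intervals f_i[0,1] overlap only in
   f_2[0,1] \<inter> f_3[0,1], and f_2 f_4 = f_3 f_1.  So the first digit of a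
   coding is determined by the position of the point except on that overlap; in particular
   f_1 and f_4 preserve the number of codings, and U_1 \<inter> (U_1 + 1 - lam) = f_4(U_1).
   If x has exactly two codings, stripping their common prefix leads to a point of
   f_2 f_4(U_1), so U_2 is a countable union of similar copies of U_1 containing one such
   copy.  Similarities preserve H^s-null sets and countable unions of null sets are null,
   so U_2, f_4(U_1) and U_1 have the same null sets for every s > 0. *)

section \<open>Null sets of the Hausdorff measures\<close>

definition delta_cover :: "real \<Rightarrow> real set \<Rightarrow> (nat \<Rightarrow> real set) \<Rightarrow> bool" where
  "delta_cover \<delta> A C \<longleftrightarrow> A \<subseteq> (\<Union>n. C n) \<and> (\<forall>n. bounded (C n) \<and> diameter (C n) \<le> \<delta>)"

lemma hausdorff_content_eq_0_iff:
  "hausdorff_content s \<delta> A = 0 \<longleftrightarrow>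
     (\<forall>e>0. \<exists>C. delta_cover \<delta> A C \<and> (\<Sum>n. ennreal (diameter (C n) powr s)) < ennreal e)"
proof
  assume "hausdorff_content s \<delta> A = 0"
  then show "\<forall>e>0. \<exists>C. delta_cover \<delta> A C \<and> (\<Sum>n. ennreal (diameter (C n) powr s)) < ennreal e"
  proof (intro allI impI)
    fix e :: real assume "0 < e"
    with \<open>hausdorff_content s \<delta> A = 0\<close> have "hausdorff_content s \<delta> A < ennreal e" by simp
    then show "\<exists>C. delta_cover \<delta> A C \<and> (\<Sum>n. ennreal (diameter (C n) powr s)) < ennreal e"
      unfolding hausdorff_content_def delta_cover_def INF_less_iff by auto
  qed
next
  assume small: "\<forall>e>0. \<exists>C. delta_cover \<delta> A C \<and> (\<Sum>n. ennreal (diameter (C n) powr s)) < ennreal e"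
  have "hausdorff_content s \<delta> A \<le> 0 + ennreal e" if "0 < e" for e
  proof -
    obtain C where "delta_cover \<delta> A C" "(\<Sum>n. ennreal (diameter (C n) powr s)) < ennreal e"
      using small \<open>0 < e\<close> by blast
    then show ?thesis
      unfolding hausdorff_content_def delta_cover_def
      by (intro order.trans[OF INF_lower]) auto
  qed
  then have "hausdorff_content s \<delta> A \<le> 0"
    by (rule ennreal_le_epsilon) simp
  then show "hausdorff_content s \<delta> A = 0" by simp
qed

lemma hausdorff_measure_eq_0_iff:
  "hausdorff_measure s A = 0 \<longleftrightarrow> (\<forall>\<delta>>0. hausdorff_content s \<delta> A = 0)"
proof
  assume "hausdorff_measure s A = 0"
  then show "\<forall>\<delta>>0. hausdorff_content s \<delta> A = 0"
    unfolding hausdorff_measure_def by (metis SUP_upper greaterThan_iff le_zero_eq)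
qed (simp add: hausdorff_measure_def)

lemma hausdorff_measure_null_subset:
  assumes "A \<subseteq> B" "hausdorff_measure s B = 0"
  shows "hausdorff_measure s A = 0"
  using assms unfolding hausdorff_measure_eq_0_iff hausdorff_content_eq_0_iff delta_cover_def
  by (meson subset_trans)

lemma bounded_affine_image_diameter_le:
  fixes a b :: real
  assumes "bounded C"
  shows "bounded ((\<lambda>x. a * x + b) ` C) \<and> diameter ((\<lambda>x. a * x + b) ` C) \<le> \<bar>a\<bar> * diameter C"
proof
  have "(\<lambda>x. a * x + b) ` C = (\<lambda>x. b + x) ` ((\<lambda>x. a *\<^sub>R x) ` C)"
    by (auto simp: image_image add.commute)
  then show "bounded ((\<lambda>x. a * x + b) ` C)"
    using assms bounded_scaling bounded_translation by metis
  show "diameter ((\<lambda>x. a * x + b) ` C) \<le> \<bar>a\<bar> * diameter C"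
  proof (rule diameter_le)
    show "(\<lambda>x. a * x + b) ` C \<noteq> {} \<or> 0 \<le> \<bar>a\<bar> * diameter C"
      by (simp add: diameter_ge_0)
    fix x y assume "x \<in> (\<lambda>x. a * x + b) ` C" "y \<in> (\<lambda>x. a * x + b) ` C"
    then obtain u v where "u \<in> C" "v \<in> C" "x = a * u + b" "y = a * v + b" by auto
    then have "norm (x - y) = \<bar>a\<bar> * dist u v"
      by (simp add: dist_real_def abs_mult flip: right_diff_distrib)
    also have "\<dots> \<le> \<bar>a\<bar> * diameter C"
      using diameter_bounded_bound[OF assms \<open>u \<in> C\<close> \<open>v \<in> C\<close>] by (simp add: mult_left_mono)
    finally show "norm (x - y) \<le> \<bar>a\<bar> * diameter C" .
  qed
qed

lemma hausdorff_measure_affine_image_null: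
  fixes a b s :: real
  assumes s: "0 \<le> s" and a: "a \<noteq> 0" and null: "hausdorff_measure s A = 0"
  shows "hausdorff_measure s ((\<lambda>x. a * x + b) ` A) = 0"
  unfolding hausdorff_measure_eq_0_iff hausdorff_content_eq_0_iff
proof (intro allI impI)
  fix \<delta> e :: real assume "0 < \<delta>" "0 < e"
  let ?g = "\<lambda>x. a * x + b" and ?k = "\<bar>a\<bar> powr s"
  have k: "0 < ?k" using a by simp
  obtain C where C: "delta_cover (\<delta> / \<bar>a\<bar>) A C"
      and sum: "(\<Sum>n. ennreal (diameter (C n) powr s)) < ennreal (e / ?k)"
  proof -
    have "hausdorff_content s (\<delta> / \<bar>a\<bar>) A = 0"
      using null \<open>0 < \<delta>\<close> a unfolding hausdorff_measure_eq_0_iff by simp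
    moreover have "0 < e / ?k" using \<open>0 < e\<close> k by simp
    ultimately show thesis
      using that unfolding hausdorff_content_eq_0_iff by blast
  qed
  have bd: "bounded (?g ` C n) \<and> diameter (?g ` C n) \<le> \<bar>a\<bar> * diameter (C n)" for n
    using C bounded_affine_image_diameter_le unfolding delta_cover_def by blast
  have "\<bar>a\<bar> * diameter (C n) \<le> \<delta>" for n
    using C a by (simp add: delta_cover_def pos_le_divide_eq mult.commute)
  with C bd have cover: "delta_cover \<delta> (?g ` A) (\<lambda>n. ?g ` C n)"
    unfolding delta_cover_def by (fastforce intro: order.trans)
  have "diameter (?g ` C n) powr s \<le> ?k * diameter (C n) powr s" for n
  proof -
    have "diameter (?g ` C n) powr s \<le> (\<bar>a\<bar> * diameter (C n)) powr s"
      using bd[of n] s by (intro powr_mono2) (auto simp: diameter_ge_0)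
    then show ?thesis by (simp add: powr_mult diameter_ge_0)
  qed
  then have "(\<Sum>n. ennreal (diameter (?g ` C n) powr s)) \<le> (\<Sum>n. ennreal ?k * ennreal (diameter (C n) powr s))"
    by (intro suminf_le summableI) (simp_all add: ennreal_leI flip: ennreal_mult)
  also have "\<dots> = ennreal ?k * (\<Sum>n. ennreal (diameter (C n) powr s))" by simp
  also have "\<dots> < ennreal ?k * ennreal (e / ?k)"
    using sum k by (intro ennreal_mult_strict_left_mono) auto
  also have "\<dots> = ennreal e" using k \<open>0 < e\<close> by (simp flip: ennreal_mult)
  finally show "\<exists>C. delta_cover \<delta> (?g ` A) C \<and> (\<Sum>n. ennreal (diameter (C n) powr s)) < ennreal e"
    using cover by blast
qed

lemma hausdorff_measure_affine_image_null_iff: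
  fixes a b s :: real
  assumes "0 \<le> s" "a \<noteq> 0"
  shows "hausdorff_measure s ((\<lambda>x. a * x + b) ` A) = 0 \<longleftrightarrow> hausdorff_measure s A = 0"
proof
  assume null: "hausdorff_measure s ((\<lambda>x. a * x + b) ` A) = 0"
  have "1 / a \<noteq> 0" using assms by simp
  from hausdorff_measure_affine_image_null[OF assms(1) this null]
  have "hausdorff_measure s ((\<lambda>x. (1 / a) * x + (- b / a)) ` ((\<lambda>x. a * x + b) ` A)) = 0" .
  moreover have "(\<lambda>x. (1 / a) * x + (- b / a)) ` ((\<lambda>x. a * x + b) ` A) = A"
    using assms by (auto simp: image_image field_simps)
  ultimately show "hausdorff_measure s A = 0" by simp
qed (use hausdorff_measure_affine_image_null assms in blast)

lemma hausdorff_measure_UN_nat_null: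
  fixes A :: "nat \<Rightarrow> real set"
  assumes null: "\<And>n. hausdorff_measure s (A n) = 0"
  shows "hausdorff_measure s (\<Union>n. A n) = 0"
  unfolding hausdorff_measure_eq_0_iff hausdorff_content_eq_0_iff
proof (intro allI impI)
  fix \<delta> e :: real assume "0 < \<delta>" "0 < e"
  \<comment> \<open>cover A n at cost below (e/2) / 2^(n+1) and merge the covers along a pairing of indices\<close>
  have "\<forall>n. \<exists>C. delta_cover \<delta> (A n) C \<and> (\<Sum>k. ennreal (diameter (C k) powr s)) < ennreal (e/2 * (1/2)^Suc n)"
    using null \<open>0 < \<delta>\<close> \<open>0 < e\<close> unfolding hausdorff_measure_eq_0_iff hausdorff_content_eq_0_iff by simp
  from choice[OF this] obtain C where
    "\<forall>n. delta_cover \<delta> (A n) (C n) \<and> (\<Sum>k. ennreal (diameter (C n k) powr s)) < ennreal (e/2 * (1/2)^Suc n)"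
    by blast
  then have C: "\<And>n. delta_cover \<delta> (A n) (C n)"
    and sum: "\<And>n. (\<Sum>k. ennreal (diameter (C n k) powr s)) < ennreal (e/2 * (1/2)^Suc n)"
    by simp_all
  define D where "D i = (case prod_decode i of (n, k) \<Rightarrow> C n k)" for i
  have "(\<Union>n. A n) \<subseteq> (\<Union>i. D i)"
  proof
    fix x assume "x \<in> (\<Union>n. A n)"
    then obtain n k where "x \<in> C n k" using C unfolding delta_cover_def by blast
    then have "x \<in> D (prod_encode (n, k))" by (simp add: D_def)
    then show "x \<in> (\<Union>i. D i)" by blast
  qed
  with C have cover: "delta_cover \<delta> (\<Union>n. A n) D"
    unfolding delta_cover_def D_def by (simp split: prod.split)
  have "(\<Sum>i. ennreal (diameter (D i) powr s))
      = (\<Sum>i. (\<lambda>(n, k). ennreal (diameter (C n k) powr s)) (prod_decode i))"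
    unfolding D_def by (simp add: case_prod_unfold)
  also have "\<dots> = (\<Sum>n. \<Sum>k. ennreal (diameter (C n k) powr s))"
    by (rule suminf_ennreal_2dimen) simp
  also have "\<dots> \<le> (\<Sum>n. ennreal (e/2 * (1/2)^Suc n))"
    using sum by (intro suminf_le) (auto intro: less_imp_le)
  also have "\<dots> = ennreal (e/2)"
    using \<open>0 < e\<close> by (intro suminf_ennreal_eq) (auto intro: sums_mult[OF power_half_series, of "e/2", simplified])
  also have "\<dots> < ennreal e"
    using \<open>0 < e\<close> by (simp add: ennreal_lessI)
  finally show "\<exists>D. delta_cover \<delta> (\<Union>n. A n) D \<and> (\<Sum>n. ennreal (diameter (D n) powr s)) < ennreal e"
    using cover by blast
qed

lemma hausdorff_measure_UN_null:
  fixes A :: "'i::countable \<Rightarrow> real set"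
  assumes "\<And>i. hausdorff_measure s (A i) = 0"
  shows "hausdorff_measure s (\<Union>i. A i) = 0"
proof -
  have "(\<Union>i. A i) = (\<Union>n. A (from_nat n))"
  proof (intro equalityI subsetI)
    fix x assume "x \<in> (\<Union>i. A i)"
    then obtain i where "x \<in> A i" by blast
    then have "x \<in> A (from_nat (to_nat i))" by simp
    then show "x \<in> (\<Union>n. A (from_nat n))" by blast
  qed blast
  then show ?thesis using hausdorff_measure_UN_nat_null[of s "\<lambda>n. A (from_nat n)"] assms by simp
qed

lemma hausdorff_dim_eqI:
  assumes "\<And>s. 0 < s \<Longrightarrow> hausdorff_measure s A = 0 \<longleftrightarrow> hausdorff_measure s B = 0"
  shows "hausdorff_dim A = hausdorff_dim B"
  unfolding hausdorff_dim_def using assms by (intro arg_cong[where f=Inf]) auto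

section \<open>Codings\<close>

definition ifs_offset :: "real \<Rightarrow> nat \<Rightarrow> real" where
  "ifs_offset lam i =
     (if i = 1 then 0 else if i = 2 then 2 * lam else if i = 3 then 3 * lam - lam ^ 2 else 1 - lam)"

lemma ifs_map_eq: "ifs_map lam i x = lam * x + ifs_offset lam i"
  by (simp add: ifs_map_def ifs_offset_def)

lemma ifs_map_inj: "lam \<noteq> 0 \<Longrightarrow> ifs_map lam i y = ifs_map lam i z \<Longrightarrow> y = z"
  by (simp add: ifs_map_eq)

lemma comp_prefix_affine: "comp_prefix lam c n x = lam ^ n * x + comp_prefix lam c n 0"
proof (induction n arbitrary: x)
  case (Suc n)
  have "comp_prefix lam c (Suc n) x = lam ^ n * (lam * x + ifs_offset lam (c n)) + comp_prefix lam c n 0"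
    using Suc[of "ifs_map lam (c n) x"] by (simp add: ifs_map_eq)
  moreover have "comp_prefix lam c (Suc n) 0 = lam ^ n * ifs_offset lam (c n) + comp_prefix lam c n 0"
    using Suc[of "ifs_map lam (c n) 0"] by (simp add: ifs_map_eq)
  ultimately show ?case by (simp add: algebra_simps)
qed simp

lemma comp_prefix_inj:
  assumes "lam \<noteq> 0"
  shows "inj (comp_prefix lam c n)"
proof (rule injI)
  fix y z assume "comp_prefix lam c n y = comp_prefix lam c n z"
  then have "lam ^ n * y = lam ^ n * z"
    using comp_prefix_affine[of lam c n y] comp_prefix_affine[of lam c n z] by linarith
  then show "y = z" using assms by simp
qed

lemma comp_prefix_cong: "(\<And>k. k < n \<Longrightarrow> c k = d k) \<Longrightarrow> comp_prefix lam c n = comp_prefix lam d n"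
  by (induction n) auto

lemma comp_prefix_add:
  "comp_prefix lam c (n + m) x = comp_prefix lam c n (comp_prefix lam (\<lambda>k. c (n + k)) m x)"
  by (induction m arbitrary: x) auto

lemma is_coding_shift_iff:
  assumes "lam \<noteq> 0"
  shows "is_coding lam c x \<longleftrightarrow> (\<forall>k<n. c k \<in> {1..4})
           \<and> (\<exists>z. is_coding lam (\<lambda>k. c (n + k)) z \<and> x = comp_prefix lam c n z)"
proof -
  define p where "p m = comp_prefix lam (\<lambda>k. c (n + k)) m 0" for m
  define b where "b = comp_prefix lam c n 0"
  have a: "lam ^ n \<noteq> 0" using assms by simp
  have tail: "comp_prefix lam c (m + n) 0 = lam ^ n * p m + b" for m
    unfolding p_def b_def using comp_prefix_add comp_prefix_affine by (metis add.commute)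
  have "(\<lambda>m. comp_prefix lam c m 0) \<longlonglongrightarrow> x \<longleftrightarrow> (\<lambda>m. comp_prefix lam c (m + n) 0) \<longlonglongrightarrow> x"
    by (rule iffI, erule LIMSEQ_ignore_initial_segment, erule LIMSEQ_offset)
  also have "\<dots> \<longleftrightarrow> (\<lambda>m. lam ^ n * p m + b) \<longlonglongrightarrow> x"
    by (simp only: tail)
  also have "\<dots> \<longleftrightarrow> (\<exists>z. p \<longlonglongrightarrow> z \<and> x = lam ^ n * z + b)"
  proof
    assume lim: "(\<lambda>m. lam ^ n * p m + b) \<longlonglongrightarrow> x"
    have "(\<lambda>m. ((lam ^ n * p m + b) - b) / lam ^ n) \<longlonglongrightarrow> (x - b) / lam ^ n"
      using a by (intro tendsto_intros lim) auto
    then show "\<exists>z. p \<longlonglongrightarrow> z \<and> x = lam ^ n * z + b"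
      using a by (intro exI[of _ "(x - b) / lam ^ n"]) auto
  qed (auto intro!: tendsto_eq_intros)
  finally have lim: "(\<lambda>m. comp_prefix lam c m 0) \<longlonglongrightarrow> x \<longleftrightarrow> (\<exists>z. p \<longlonglongrightarrow> z \<and> x = lam ^ n * z + b)" .
  have digits: "(\<forall>k. c k \<in> {1..4}) \<longleftrightarrow> (\<forall>k<n. c k \<in> {1..4}) \<and> (\<forall>k. c (n + k) \<in> {1..4})"
    by (metis add_diff_inverse_nat)
  have "comp_prefix lam c n z = lam ^ n * z + b" for z
    unfolding b_def by (rule comp_prefix_affine)
  then show ?thesis
    unfolding is_coding_def lim digits p_def by auto
qed

lemma is_coding_cons_iff:
  assumes "lam \<noteq> 0"
  shows "is_coding lam c x \<longleftrightarrow> c 0 \<in> {1..4}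
           \<and> (\<exists>z. is_coding lam (\<lambda>k. c (Suc k)) z \<and> x = ifs_map lam (c 0) z)"
  using is_coding_shift_iff[OF assms, of c x 1] by simp

lemma is_coding_consE:
  assumes "lam \<noteq> 0" "is_coding lam c x"
  obtains y where "is_coding lam (\<lambda>k. c (Suc k)) y" "x = ifs_map lam (c 0) y"
  using assms is_coding_cons_iff by blast

lemma is_coding_consI:
  assumes "lam \<noteq> 0" "i \<in> {1..4}" "is_coding lam d z"
  shows "is_coding lam (case_nat i d) (ifs_map lam i z)"
  using assms is_coding_cons_iff[OF assms(1), of "case_nat i d"] by auto

lemma is_coding_prefixI:
  assumes "lam \<noteq> 0" "\<forall>k<n. c k \<in> {1..4}" "is_coding lam d z"
  shows "is_coding lam (\<lambda>k. if k < n then c k else d (k - n)) (comp_prefix lam c n z)"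
proof -
  have "comp_prefix lam (\<lambda>k. if k < n then c k else d (k - n)) n = comp_prefix lam c n"
    by (rule comp_prefix_cong) simp
  then show ?thesis
    using assms is_coding_shift_iff[OF assms(1), of "\<lambda>k. if k < n then c k else d (k - n)" _ n]
    by auto
qed

lemma codings_eq_UN_first_digits:
  assumes "lam \<noteq> 0" "A \<subseteq> {1..4}"
    and first: "\<And>d. is_coding lam d x \<Longrightarrow> d 0 \<in> A"
    and pre: "\<And>i. i \<in> A \<Longrightarrow> x = ifs_map lam i (z i)"
  shows "codings lam x = (\<Union>i\<in>A. case_nat i ` codings lam (z i))"
proof
  show "(\<Union>i\<in>A. case_nat i ` codings lam (z i)) \<subseteq> codings lam x"
  proof (intro UN_least image_subsetI)
    fix i e assume "i \<in> A" "e \<in> codings lam (z i)"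
    then show "case_nat i e \<in> codings lam x"
      using is_coding_consI[OF assms(1), of i e "z i"] assms(2) pre by (auto simp: codings_def)
  qed
  show "codings lam x \<subseteq> (\<Union>i\<in>A. case_nat i ` codings lam (z i))"
  proof
    fix d assume "d \<in> codings lam x"
    then have d: "is_coding lam d x" by (simp add: codings_def)
    then obtain y where y: "is_coding lam (\<lambda>k. d (Suc k)) y" "x = ifs_map lam (d 0) y"
      by (rule is_coding_consE[OF assms(1)])
    have "d 0 \<in> A" using first[OF d] .
    have "ifs_map lam (d 0) y = ifs_map lam (d 0) (z (d 0))"
      using y(2)[symmetric] pre[OF \<open>d 0 \<in> A\<close>] by (rule trans)
    then have "y = z (d 0)" by (rule ifs_map_inj[OF assms(1)])
    then have "(\<lambda>k. d (Suc k)) \<in> codings lam (z (d 0))" using y(1) by (simp add: codings_def)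
    moreover have "d = case_nat (d 0) (\<lambda>k. d (Suc k))" by (simp add: fun_eq_iff split: nat.split)
    ultimately show "d \<in> (\<Union>i\<in>A. case_nat i ` codings lam (z i))"
      using \<open>d 0 \<in> A\<close> by (intro UN_I[of "d 0"] rev_image_eqI)
  qed
qed

lemma inj_case_nat: "inj (case_nat i)"
proof (rule injI)
  fix f g :: "nat \<Rightarrow> 'a" assume "case_nat i f = case_nat i g"
  then have "case_nat i f (Suc k) = case_nat i g (Suc k)" for k by (rule fun_cong)
  then show "f = g" by (simp add: fun_eq_iff)
qed

lemma card_case_nat_image: "card (case_nat i ` S) = card S"
  by (rule card_image) (rule inj_on_subset[OF inj_case_nat subset_UNIV])

lemma finite_case_nat_image_iff: "finite (case_nat i ` S) \<longleftrightarrow> finite S"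
  by (rule finite_image_iff) (rule inj_on_subset[OF inj_case_nat subset_UNIV])

lemma card_codings_comp_prefix_le:
  assumes "lam \<noteq> 0" "\<forall>k<n. c k \<in> {1..4}" "finite (codings lam (comp_prefix lam c n z))"
  shows "finite (codings lam z) \<and> card (codings lam z) \<le> card (codings lam (comp_prefix lam c n z))"
proof -
  let ?splice = "\<lambda>d k. if k < n then c k else d (k - n)"
  have inj: "inj_on ?splice S" for S
  proof (rule inj_onI)
    fix d e assume "?splice d = ?splice e"
    then have "?splice d (n + k) = ?splice e (n + k)" for k by (rule fun_cong)
    then show "d = e" by (simp add: fun_eq_iff)
  qed
  have sub: "?splice ` codings lam z \<subseteq> codings lam (comp_prefix lam c n z)"
    using is_coding_prefixI[OF assms(1,2)] by (auto simp: codings_def)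
  then have "finite (?splice ` codings lam z)" using assms(3) by (rule finite_subset)
  then have "finite (codings lam z)" using inj by (rule finite_imageD)
  moreover have "card (codings lam z) \<le> card (codings lam (comp_prefix lam c n z))"
    using card_mono[OF assms(3) sub] by (simp add: card_image[OF inj])
  ultimately show ?thesis by blast
qed

lemma is_coding_digit_cases: "is_coding lam c x \<Longrightarrow> c k = 1 \<or> c k = 2 \<or> c k = 3 \<or> c k = 4"
proof -
  assume "is_coding lam c x"
  then have "1 \<le> c k" "c k \<le> 4" by (simp_all add: is_coding_def)
  then show ?thesis by presburger
qed

section \<open>The attractor\<close>

definition coded_points :: "real \<Rightarrow> real set" where
  "coded_points lam = {x. \<exists>c. is_coding lam c x}"

lemma coded_points_invariant:
  assumes "lam \<noteq> 0"
  shows "coded_points lam = (\<Union>i\<in>{1..4}. ifs_map lam i ` coded_points lam)"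
  unfolding coded_points_def
  using is_coding_cons_iff[OF assms] is_coding_consI[OF assms] by fast

lemma coding_mem_closed_invariant:
  assumes lam: "\<bar>lam\<bar> < 1" and S: "closed S" "S \<noteq> {}"
    and inv: "\<And>i. i \<in> {1..4} \<Longrightarrow> ifs_map lam i ` S \<subseteq> S"
    and c: "is_coding lam c x"
  shows "x \<in> S"
proof -
  obtain y where "y \<in> S" using S(2) by blast
  have "comp_prefix lam c n y \<in> S" for n
    using c \<open>y \<in> S\<close> inv unfolding is_coding_def by (induction n arbitrary: y) auto
  moreover have "(\<lambda>n. lam ^ n * y + comp_prefix lam c n 0) \<longlonglongrightarrow> 0 * y + x"
    using c lam unfolding is_coding_def by (intro tendsto_intros LIMSEQ_power_zero) auto
  then have "(\<lambda>n. comp_prefix lam c n y) \<longlonglongrightarrow> x"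
    by (subst comp_prefix_affine) simp
  ultimately show ?thesis using closed_sequentially[OF S(1), of "\<lambda>n. comp_prefix lam c n y"] by blast
qed

lemma invariant_bounded_subset_coded_points:
  assumes lam: "\<bar>lam\<bar> < 1" and "bounded K" and inv: "K \<subseteq> (\<Union>i\<in>{1..4}. ifs_map lam i ` K)"
  shows "K \<subseteq> coded_points lam"
proof
  fix x assume "x \<in> K"
  \<comment> \<open>choose a digit and a preimage at every point of K, and iterate the choice along the orbit of x\<close>
  have "\<forall>y\<in>K. \<exists>p. fst p \<in> {1..4} \<and> snd p \<in> K \<and> y = ifs_map lam (fst p) (snd p)"
    using inv by force
  then obtain g where g: "\<And>y. y \<in> K \<Longrightarrow> fst (g y) \<in> {1..4} \<and> snd (g y) \<in> K \<and> y = ifs_map lam (fst (g y)) (snd (g y))"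
    by (metis bchoice)
  define pts where "pts n = ((snd \<circ> g) ^^ n) x" for n
  define c where "c n = fst (g (pts n))" for n
  have pts: "pts n \<in> K" for n unfolding pts_def by (induction n) (use \<open>x \<in> K\<close> g in auto)
  have x: "comp_prefix lam c n (pts n) = x" for n
  proof (induction n)
    case (Suc n)
    then show ?case using g[OF pts[of n]] by (simp add: pts_def c_def)
  qed (simp add: pts_def)
  obtain B where B: "\<And>y. y \<in> K \<Longrightarrow> \<bar>y\<bar> \<le> B" using \<open>bounded K\<close> by (auto simp: bounded_iff)
  have "(\<lambda>n. lam ^ n * pts n) \<longlonglongrightarrow> 0"
  proof (rule Lim_null_comparison)
    show "\<forall>\<^sub>F n in sequentially. norm (lam ^ n * pts n) \<le> \<bar>lam\<bar> ^ n * B"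
      using B pts by (auto simp: abs_mult power_abs intro!: always_eventually mult_left_mono)
    show "(\<lambda>n. \<bar>lam\<bar> ^ n * B) \<longlonglongrightarrow> 0"
      using lam by (intro tendsto_mult_left_zero LIMSEQ_power_zero) auto
  qed
  then have "(\<lambda>n. x - lam ^ n * pts n) \<longlonglongrightarrow> x - 0" by (intro tendsto_intros)
  moreover have "comp_prefix lam c n 0 = x - lam ^ n * pts n" for n
    using x[of n] comp_prefix_affine[of lam c n "pts n"] by simp
  ultimately have "is_coding lam c x"
    unfolding is_coding_def c_def using g pts by simp
  then show "x \<in> coded_points lam" unfolding coded_points_def by blast
qed

lemma invariant_compact_eq_coded_points:
  assumes lam: "\<bar>lam\<bar> < 1" and K: "compact K" "K \<noteq> {}" "K = (\<Union>i\<in>{1..4}. ifs_map lam i ` K)"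
  shows "K = coded_points lam"
proof
  show "K \<subseteq> coded_points lam"
    using invariant_bounded_subset_coded_points[OF lam compact_imp_bounded[OF K(1)]] K(3) by blast
  show "coded_points lam \<subseteq> K"
    unfolding coded_points_def
    using coding_mem_closed_invariant[OF lam compact_imp_closed[OF K(1)] K(2)] K(3) by blast
qed

locale small_ifs =
  fixes lam :: real
  assumes lam_pos: "0 < lam" and lam_le: "lam \<le> 1/4"
begin

lemma lam_ne_0: "lam \<noteq> 0"
  using lam_pos by simp

lemma ifs_offset_bounds: "0 \<le> ifs_offset lam i \<and> ifs_offset lam i \<le> 1 - lam"
proof -
  have "lam ^ 2 \<le> lam"
    using lam_pos lam_le by (auto simp: power2_eq_square mult_left_le)
  then have "0 \<le> 3 * lam - lam ^ 2" "3 * lam - lam ^ 2 \<le> 1 - lam"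
    using lam_pos lam_le zero_le_power2[of lam] by linarith+
  then show ?thesis using lam_pos lam_le unfolding ifs_offset_def by simp
qed

lemma ifs_map_01: "i \<in> {1..4} \<Longrightarrow> y \<in> {0..1} \<Longrightarrow> ifs_map lam i y \<in> {0..1}"
proof -
  assume "i \<in> {1..4}" "y \<in> {0..1}"
  then have "0 \<le> lam * y" "lam * y \<le> lam"
    using lam_pos by (auto simp: mult_left_le)
  then show ?thesis
    using ifs_offset_bounds[of i] unfolding ifs_map_eq atLeastAtMost_iff
    by (intro conjI; linarith)
qed

lemma is_coding_01: "is_coding lam c x \<Longrightarrow> x \<in> {0..1}"
  using coding_mem_closed_invariant[of lam "{0..1}"] ifs_map_01 lam_pos lam_le by fastforce

lemma attractor_eq_coded_points: "attractor lam = coded_points lam"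
proof -
  let ?F = "\<lambda>S. \<Union>i\<in>{1..4}. ifs_map lam i ` S"
  let ?C = "closure (coded_points lam)"
  have lam: "\<bar>lam\<bar> < 1" "lam \<noteq> 0" using lam_pos lam_le by auto
  have cont: "continuous_on S (ifs_map lam i)" for S i unfolding ifs_map_eq by (intro continuous_intros)
  have "comp_prefix lam (\<lambda>_. 1) n 0 = 0" for n by (induction n) (auto simp: ifs_map_def)
  then have "is_coding lam (\<lambda>_. 1) 0" by (simp add: is_coding_def)
  then have ne: "coded_points lam \<noteq> {}" by (auto simp: coded_points_def)
  have inv: "coded_points lam = ?F (coded_points lam)" by (rule coded_points_invariant[OF lam(2)])
  have "coded_points lam \<subseteq> {0..1}" using is_coding_01 by (auto simp: coded_points_def)
  then have C: "compact ?C"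
    using bounded_subset[OF bounded_closed_interval] by (simp add: compact_closure)
  \<comment> \<open>the closure of the coded points is again invariant, so by uniqueness it adds no points\<close>
  have "compact (?F ?C)"
    using C cont by (intro compact_UN compact_continuous_image) auto
  moreover have "coded_points lam \<subseteq> ?F ?C"
    using closure_subset[of "coded_points lam"] inv by blast
  ultimately have "?C \<subseteq> ?F ?C" by (intro closure_minimal compact_imp_closed)
  moreover have "?F ?C \<subseteq> ?C"
  proof (intro UN_least image_closure_subset[OF cont closed_closure])
    fix i :: nat assume "i \<in> {1..4}"
    then show "ifs_map lam i ` coded_points lam \<subseteq> ?C" using inv closure_subset by blast
  qed
  ultimately have "?C = coded_points lam"
    using invariant_compact_eq_coded_points[OF lam(1) C] ne by auto
  show ?thesis
    unfolding attractor_def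
  proof (rule the_equality)
    show "compact (coded_points lam) \<and> coded_points lam \<noteq> {} \<and> coded_points lam = ?F (coded_points lam)"
      using \<open>?C = coded_points lam\<close> C ne inv by simp
  qed (use invariant_compact_eq_coded_points[OF lam(1)] in blast)
qed

lemma ifs_offset_ge:
  assumes "i \<noteq> 1"
  shows "2 * lam \<le> ifs_offset lam i"
proof -
  have "lam ^ 2 \<le> lam" using lam_pos lam_le by (auto simp: power2_eq_square mult_left_le)
  then show ?thesis using assms lam_le by (simp add: ifs_offset_def)
qed

lemma first_digit_bounds:
  assumes "is_coding lam c x"
  shows "ifs_offset lam (c 0) \<le> x \<and> x \<le> ifs_offset lam (c 0) + lam"
proof -
  obtain y where y: "is_coding lam (\<lambda>k. c (Suc k)) y" "x = ifs_map lam (c 0) y"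
    using is_coding_consE[OF lam_ne_0 assms] .
  have "0 \<le> lam * y" "lam * y \<le> lam"
    using is_coding_01[OF y(1)] lam_pos by (auto simp: mult_left_le)
  then show ?thesis unfolding y(2) ifs_map_eq by simp
qed

lemma first_digit_1_iff:
  assumes "is_coding lam c x"
  shows "c 0 = 1 \<longleftrightarrow> x \<le> lam"
  using first_digit_bounds[OF assms] ifs_offset_ge[of "c 0"] lam_pos
  by (cases "c 0 = 1") (auto simp: ifs_offset_def)

end

section \<open>Points with one or two codings\<close>

lemma sqrt_21_gt: "(9/2 :: real) < sqrt 21"
  by (rule real_less_rsqrt) (simp add: power2_eq_square)

locale separated_ifs =
  fixes lam :: real
  assumes lam_pos: "0 < lam" and lam_sep: "lam < (5 - sqrt 21) / 2"
begin

lemma lam_quadratic_bound: "4 * lam - lam ^ 2 < 1 - lam"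
proof -
  \<comment> \<open>lam lies below the smaller root of t^2 - 5t + 1\<close>
  define r r' where "r = (5 - sqrt 21) / 2" and "r' = (5 + sqrt 21) / 2"
  have "0 < (r - lam) * (r' - lam)"
    using lam_sep sqrt_21_gt unfolding r_def r'_def by (intro mult_pos_pos) auto
  also have "(r - lam) * (r' - lam) = r * r' - (r + r') * lam + lam ^ 2"
    by (simp add: algebra_simps power2_eq_square)
  also have "\<dots> = 1 - 5 * lam + lam ^ 2"
    unfolding r_def r'_def by (simp add: field_simps)
  finally show ?thesis by simp
qed

lemma lam_less_quarter: "lam < 1/4"
  using lam_sep sqrt_21_gt by simp

sublocale small_ifs
  using lam_pos lam_less_quarter by unfold_locales auto

lemma ifs_offset_add_lam_less: "i \<in> {1, 2, 3} \<Longrightarrow> ifs_offset lam i + lam < 1 - lam"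
  using lam_pos lam_less_quarter lam_quadratic_bound by (auto simp: ifs_offset_def)

lemma first_digit_4_iff:
  assumes "is_coding lam c x"
  shows "c 0 = 4 \<longleftrightarrow> 1 - lam \<le> x"
  using first_digit_bounds[OF assms] ifs_offset_add_lam_less[of "c 0"] is_coding_digit_cases[OF assms, of 0]
  by (cases "c 0 = 4") (auto simp: ifs_offset_def)

lemma distinct_first_digits:
  assumes "is_coding lam c x" "is_coding lam d x" "c 0 \<noteq> d 0"
  shows "c 0 = 2 \<and> d 0 = 3 \<or> c 0 = 3 \<and> d 0 = 2"
  using is_coding_digit_cases[OF assms(1), of 0] is_coding_digit_cases[OF assms(2), of 0] assms(3)
    first_digit_1_iff[OF assms(1)] first_digit_1_iff[OF assms(2)]
    first_digit_4_iff[OF assms(1)] first_digit_4_iff[OF assms(2)]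
  by auto

lemma codings_ifs_map_1_4:
  assumes "i = 1 \<or> i = 4" "y \<in> {0..1}"
  shows "codings lam (ifs_map lam i y) = case_nat i ` codings lam y"
proof -
  have "0 \<le> lam * y" "lam * y \<le> lam" using assms(2) lam_pos by (auto simp: mult_left_le)
  then have "ifs_map lam 1 y \<le> lam" "1 - lam \<le> ifs_map lam 4 y"
    by (simp_all add: ifs_map_eq ifs_offset_def)
  then have "d 0 = i" if "is_coding lam d (ifs_map lam i y)" for d
    using assms(1) first_digit_1_iff[OF that] first_digit_4_iff[OF that] by auto
  then have "codings lam (ifs_map lam i y) = (\<Union>j\<in>{i}. case_nat j ` codings lam y)"
    using assms(1) by (intro codings_eq_UN_first_digits lam_ne_0) auto
  then show ?thesis by simp
qed

lemma ifs_map_2_4_eq: "ifs_map lam 2 (ifs_map lam 4 y) = ifs_map lam 3 (ifs_map lam 1 y)"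
  by (simp add: ifs_map_eq ifs_offset_def algebra_simps power2_eq_square)

lemma codings_ifs_map_2_4:
  assumes "y \<in> {0..1}"
  shows "codings lam (ifs_map lam 2 (ifs_map lam 4 y))
       = case_nat 2 ` case_nat 4 ` codings lam y \<union> case_nat 3 ` case_nat 1 ` codings lam y"
proof -
  let ?x = "ifs_map lam 2 (ifs_map lam 4 y)"
  let ?z = "\<lambda>i. if i = 2 then ifs_map lam 4 y else ifs_map lam 1 y"
  have "?x = lam ^ 2 * y + 3 * lam - lam ^ 2"
    by (simp add: ifs_map_eq ifs_offset_def algebra_simps power2_eq_square)
  moreover have "0 \<le> lam ^ 2 * y" "lam ^ 2 * y \<le> lam ^ 2" "lam ^ 2 < lam"
    using assms lam_pos lam_less_quarter by (auto simp: mult_left_le power2_eq_square)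
  ultimately have "lam < ?x" "?x < 1 - lam" using lam_less_quarter by linarith+
  then have "d 0 \<in> {2, 3}" if "is_coding lam d ?x" for d
    using first_digit_1_iff[OF that] first_digit_4_iff[OF that] is_coding_digit_cases[OF that, of 0]
    by auto
  moreover have "?x = ifs_map lam i (?z i)" if "i \<in> {2, 3}" for i
    using that ifs_map_2_4_eq by auto
  ultimately have "codings lam ?x = (\<Union>i\<in>{2, 3}. case_nat i ` codings lam (?z i))"
    by (intro codings_eq_UN_first_digits lam_ne_0) auto
  also have "\<dots> = case_nat 2 ` codings lam (ifs_map lam 4 y) \<union> case_nat 3 ` codings lam (ifs_map lam 1 y)"
    by simp
  finally show ?thesis using codings_ifs_map_1_4 assms by simp
qed

lemma card_codings_ifs_map_2_4:
  assumes "y \<in> {0..1}"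
  shows "card (codings lam (ifs_map lam 2 (ifs_map lam 4 y))) = 2 * card (codings lam y)"
proof (cases "finite (codings lam y)")
  case True
  have "case_nat 2 ` case_nat 4 ` codings lam y \<inter> case_nat 3 ` case_nat 1 ` codings lam y = {}"
    by (auto dest: fun_cong[of _ _ 0])
  then show ?thesis
    using True unfolding codings_ifs_map_2_4[OF assms]
    by (simp add: card_Un_disjoint finite_case_nat_image_iff card_case_nat_image)
next
  case False
  then show ?thesis
    unfolding codings_ifs_map_2_4[OF assms] by (simp add: finite_case_nat_image_iff)
qed

lemma mem_U_iff: "1 \<le> k \<Longrightarrow> x \<in> U lam k \<longleftrightarrow> card (codings lam x) = k"
  unfolding U_def attractor_eq_coded_points
  using card_gt_0_iff[of "codings lam x"] by (auto simp: coded_points_def codings_def)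

lemma U_subset_01: "U lam k \<subseteq> {0..1}"
  unfolding U_def attractor_eq_coded_points coded_points_def using is_coding_01 by blast

lemma ifs_map_1_4_mem_U_iff:
  assumes "i = 1 \<or> i = 4" "y \<in> {0..1}" "1 \<le> k"
  shows "ifs_map lam i y \<in> U lam k \<longleftrightarrow> y \<in> U lam k"
  using assms by (simp add: mem_U_iff codings_ifs_map_1_4 card_case_nat_image)

lemma ifs_map_2_4_mem_U2_iff:
  "y \<in> {0..1} \<Longrightarrow> ifs_map lam 2 (ifs_map lam 4 y) \<in> U lam 2 \<longleftrightarrow> y \<in> U lam 1"
  by (simp add: mem_U_iff card_codings_ifs_map_2_4)

lemma ifs_map_4_image_U1: "ifs_map lam 4 ` U lam 1 = {x \<in> U lam 1. 1 - lam \<le> x}"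
proof (intro equalityI subsetI)
  fix x assume "x \<in> ifs_map lam 4 ` U lam 1"
  then obtain y where y: "y \<in> U lam 1" "x = ifs_map lam 4 y" by blast
  moreover have "y \<in> {0..1}" using U_subset_01 y(1) by blast
  moreover have "1 - lam \<le> ifs_map lam 4 y"
    using \<open>y \<in> {0..1}\<close> lam_pos by (simp add: ifs_map_eq ifs_offset_def)
  ultimately show "x \<in> {x \<in> U lam 1. 1 - lam \<le> x}"
    using ifs_map_1_4_mem_U_iff[of 4 y 1] by simp
next
  fix x assume x: "x \<in> {x \<in> U lam 1. 1 - lam \<le> x}"
  then obtain c where c: "is_coding lam c x"
    unfolding U_def attractor_eq_coded_points coded_points_def by blast
  then have "c 0 = 4" using first_digit_4_iff x by blast
  obtain y where y: "is_coding lam (\<lambda>k. c (Suc k)) y" "x = ifs_map lam 4 y"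
    using is_coding_consE[OF lam_ne_0 c] \<open>c 0 = 4\<close> by metis
  then have "y \<in> U lam 1" using is_coding_01 ifs_map_1_4_mem_U_iff[of 4 y 1] x by auto
  then show "x \<in> ifs_map lam 4 ` U lam 1" using y(2) by blast
qed

lemma U1_inter_translate_eq: "U lam 1 \<inter> (\<lambda>x. x + 1 - lam) ` U lam 1 = ifs_map lam 4 ` U lam 1"
proof (intro equalityI subsetI)
  fix x assume "x \<in> U lam 1 \<inter> (\<lambda>x. x + 1 - lam) ` U lam 1"
  then show "x \<in> ifs_map lam 4 ` U lam 1"
    unfolding ifs_map_4_image_U1 using U_subset_01 by force
next
  fix x assume "x \<in> ifs_map lam 4 ` U lam 1"
  then obtain y where y: "y \<in> U lam 1" "x = ifs_map lam 4 y" by blast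
  then have "y \<in> {0..1}" using U_subset_01 by blast
  then have "x \<in> U lam 1" "ifs_map lam 1 y \<in> U lam 1"
    using y ifs_map_1_4_mem_U_iff[of _ y 1] by auto
  moreover have "x = ifs_map lam 1 y + 1 - lam" using y(2) by (simp add: ifs_map_eq ifs_offset_def)
  ultimately show "x \<in> U lam 1 \<inter> (\<lambda>x. x + 1 - lam) ` U lam 1" by blast
qed

lemma first_digit_4_set_eq: "{x \<in> U lam 1. \<exists>c. is_coding lam c x \<and> c 0 = 4} = ifs_map lam 4 ` U lam 1"
  unfolding ifs_map_4_image_U1 using first_digit_4_iff
  unfolding U_def attractor_eq_coded_points coded_points_def by blast

definition U2_core :: "real set" where
  "U2_core = (\<lambda>y. ifs_map lam 2 (ifs_map lam 4 y)) ` U lam 1"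

lemma U2_core_subset: "U2_core \<subseteq> U lam 2"
  unfolding U2_core_def using ifs_map_2_4_mem_U2_iff U_subset_01 by blast

lemma U2_core_eq_affine_image: "U2_core = (\<lambda>y. lam ^ 2 * y + (3 * lam - lam ^ 2)) ` U lam 1"
  unfolding U2_core_def by (simp add: ifs_map_eq ifs_offset_def algebra_simps power2_eq_square)

lemma U2_mem_core_if_first_digits_2_3:
  assumes x: "x \<in> U lam 2" and c: "is_coding lam c x" "c 0 = 2" and d: "is_coding lam d x" "d 0 = 3"
  shows "x \<in> U2_core"
proof -
  obtain a where a: "is_coding lam (\<lambda>k. c (Suc k)) a" "x = ifs_map lam 2 a"
    using is_coding_consE[OF lam_ne_0 c(1)] c(2) by metis
  obtain b where b: "is_coding lam (\<lambda>k. d (Suc k)) b" "x = ifs_map lam 3 b"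
    using is_coding_consE[OF lam_ne_0 d(1)] d(2) by metis
  \<comment> \<open>the overlap relation f2(a) = f3(b) forces a = b + 1 - lam, so a begins with the digit 4\<close>
  have "lam * (a - (b + 1 - lam)) = 0"
    using a(2) b(2) by (simp add: ifs_map_eq ifs_offset_def algebra_simps power2_eq_square)
  then have "1 - lam \<le> a" using is_coding_01[OF b(1)] lam_pos by simp
  then have "c 1 = 4" using first_digit_4_iff[OF a(1)] by simp
  then obtain y where y: "is_coding lam (\<lambda>k. c (Suc (Suc k))) y" "a = ifs_map lam 4 y"
    using is_coding_consE[OF lam_ne_0 a(1)] by (metis One_nat_def)
  have "y \<in> U lam 1"
    using x a(2) y(2) ifs_map_2_4_mem_U2_iff is_coding_01[OF y(1)] by simp
  then show ?thesis unfolding U2_core_def using a(2) y(2) by blast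
qed

lemma U2_shift_to_first_difference:
  assumes x: "x \<in> U lam 2" and c: "is_coding lam c x" and d: "is_coding lam d x"
    and agree: "\<forall>k<n. c k = d k" and differ: "c n \<noteq> d n"
  shows "\<exists>z \<in> U lam 2. x = comp_prefix lam c n z
           \<and> is_coding lam (\<lambda>k. c (n + k)) z \<and> is_coding lam (\<lambda>k. d (n + k)) z"
proof -
  obtain z where z: "is_coding lam (\<lambda>k. c (n + k)) z" "x = comp_prefix lam c n z"
    and digits: "\<forall>k<n. c k \<in> {1..4}"
    using c is_coding_shift_iff[OF lam_ne_0] by blast
  obtain z' where z': "is_coding lam (\<lambda>k. d (n + k)) z'" "x = comp_prefix lam d n z'"
    using d is_coding_shift_iff[OF lam_ne_0] by blast
  have "comp_prefix lam d n = comp_prefix lam c n" using agree by (intro comp_prefix_cong) simp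
  then have "z' = z"
    using z(2) z'(2) injD[OF comp_prefix_inj[OF lam_ne_0]] by metis
  have card_x: "card (codings lam x) = 2" using x mem_U_iff by simp
  then have "finite (codings lam x)" by (intro card_ge_0_finite) simp
  then have fin: "finite (codings lam z)" and "card (codings lam z) \<le> 2"
    using card_codings_comp_prefix_le[OF lam_ne_0 digits, of z] z(2) card_x by simp_all
  moreover have "{\<lambda>k. c (n + k), \<lambda>k. d (n + k)} \<subseteq> codings lam z"
    using z(1) z'(1) \<open>z' = z\<close> by (simp add: codings_def)
  moreover have "(\<lambda>k. c (n + k)) \<noteq> (\<lambda>k. d (n + k))"
    using fun_cong[of "\<lambda>k. c (n + k)" "\<lambda>k. d (n + k)" 0] differ by auto
  ultimately have "card (codings lam z) = 2"
    using card_mono[OF fin, of "{\<lambda>k. c (n + k), \<lambda>k. d (n + k)}"] by simp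
  then have "z \<in> U lam 2" using mem_U_iff by simp
  then show ?thesis using z z'(1) \<open>z' = z\<close> by blast
qed

lemma U2_subset_UN_prefix_images:
  "U lam 2 \<subseteq> (\<Union>w :: nat list. comp_prefix lam ((!) w) (length w) ` U2_core)"
proof
  fix x assume x: "x \<in> U lam 2"
  then have "card (codings lam x) = 2" using mem_U_iff by simp
  then obtain c d where "codings lam x = {c, d}" "c \<noteq> d" by (meson card_2_iff)
  then have cd: "is_coding lam c x" "is_coding lam d x" "c \<noteq> d"
    unfolding codings_def by blast+
  then have "\<exists>k. c k \<noteq> d k" by (meson ext)
  define n where "n = (LEAST k. c k \<noteq> d k)"
  have differ: "c n \<noteq> d n" unfolding n_def by (rule LeastI_ex) fact
  have agree: "\<forall>k<n. c k = d k" unfolding n_def using not_less_Least by blast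
  obtain z where z: "z \<in> U lam 2" "x = comp_prefix lam c n z"
    "is_coding lam (\<lambda>k. c (n + k)) z" "is_coding lam (\<lambda>k. d (n + k)) z"
    using U2_shift_to_first_difference[OF x cd(1,2) agree differ] by blast
  have "c n = 2 \<and> d n = 3 \<or> c n = 3 \<and> d n = 2"
    using distinct_first_digits[OF z(3,4)] differ by simp
  then have "z \<in> U2_core"
    using U2_mem_core_if_first_digits_2_3[OF z(1) z(3) _ z(4)] U2_mem_core_if_first_digits_2_3[OF z(1) z(4) _ z(3)]
    by (elim disjE) simp_all
  moreover have "comp_prefix lam c n = comp_prefix lam ((!) (map c [0..<n])) (length (map c [0..<n]))"
    unfolding length_map length_upt diff_zero by (rule comp_prefix_cong) simp
  ultimately have "x \<in> comp_prefix lam ((!) (map c [0..<n])) (length (map c [0..<n])) ` U2_core"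
    using z(2) by (metis image_eqI)
  then show "x \<in> (\<Union>w. comp_prefix lam ((!) w) (length w) ` U2_core)"
    by (rule UN_I[OF UNIV_I])
qed

lemma null_U2_iff_null_U1:
  assumes "0 < s"
  shows "hausdorff_measure s (U lam 2) = 0 \<longleftrightarrow> hausdorff_measure s (U lam 1) = 0"
proof -
  have s: "0 \<le> s" and lam2: "lam ^ 2 \<noteq> 0" using assms lam_pos by auto
  show ?thesis
  proof
    assume "hausdorff_measure s (U lam 1) = 0"
    then have "hausdorff_measure s U2_core = 0"
      unfolding U2_core_eq_affine_image by (rule hausdorff_measure_affine_image_null[OF s lam2])
    then have "hausdorff_measure s (comp_prefix lam ((!) w) (length w) ` U2_core) = 0" for w :: "nat list"
      using hausdorff_measure_affine_image_null[OF s] lam_pos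
      by (subst comp_prefix_affine[abs_def]) simp
    then show "hausdorff_measure s (U lam 2) = 0"
      by (intro hausdorff_measure_null_subset[OF U2_subset_UN_prefix_images] hausdorff_measure_UN_null)
  next
    assume "hausdorff_measure s (U lam 2) = 0"
    then have "hausdorff_measure s U2_core = 0"
      using hausdorff_measure_null_subset[OF U2_core_subset] by blast
    then show "hausdorff_measure s (U lam 1) = 0"
      unfolding U2_core_eq_affine_image using hausdorff_measure_affine_image_null_iff[OF s lam2] by blast
  qed
qed

lemma null_ifs_map_4_image_iff_null_U1:
  "0 < s \<Longrightarrow> hausdorff_measure s (ifs_map lam 4 ` U lam 1) = 0 \<longleftrightarrow> hausdorff_measure s (U lam 1) = 0"
  using hausdorff_measure_affine_image_null_iff[of s lam "1 - lam" "U lam 1"] lam_pos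
  by (simp add: ifs_map_eq ifs_offset_def)

end

theorem lemma2p26:
  fixes lam :: real
  assumes "0 < lam" and "lam < (5 - sqrt 21) / 2"
  shows "hausdorff_dim (U lam 2) = hausdorff_dim (U lam 1 \<inter> (\<lambda>x. x + 1 - lam) ` U lam 1)
       \<and> hausdorff_dim (U lam 1 \<inter> (\<lambda>x. x + 1 - lam) ` U lam 1) = hausdorff_dim (U lam 1)
       \<and> U lam 1 \<inter> (\<lambda>x. x + 1 - lam) ` U lam 1
           = {x \<in> U lam 1. \<exists>c. is_coding lam c x \<and> c 0 = 4}"
proof -
  interpret separated_ifs lam using assms by unfold_locales
  have "hausdorff_dim (U lam 1 \<inter> (\<lambda>x. x + 1 - lam) ` U lam 1) = hausdorff_dim (U lam 1)"
    unfolding U1_inter_translate_eq by (intro hausdorff_dim_eqI null_ifs_map_4_image_iff_null_U1)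
  moreover have "hausdorff_dim (U lam 2) = hausdorff_dim (U lam 1)"
    by (intro hausdorff_dim_eqI null_U2_iff_null_U1)
  ultimately show ?thesis using U1_inter_translate_eq first_digit_4_set_eq by simp
qed

end
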